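(* Let $\alpha>-1$, $d\in\widetilde{D}$ (with the convention $d_{-1}=0$), $q=(L_n^{(\alpha)})_{n\in\mathbb{N}_0}$, $r_k=r_k^\alpha$, $\widetilde{q}_k=L_k^{(\alpha)}/r_k$, and let $T=E_{L^{(\alpha+1)},d}$ regarded as an operator in $H(\widetilde{q})$ with domain $\mathcal{P}_c$. For $g=\sum_kg_k\widetilde{q}_k\in H(\widetilde{q})$: (i) $g\in D(T^* )$ iff $\sum_{k=0}^\infty\left|\bar d_kg_k+\sum_{t=0}^{k-1}(\bar d_k-\bar d_{k-1})\frac{r_tg_t}{r_k}\right|^2<\infty$; (ii) for $g\in D(T^* )$, $T^*g=\sum_{k=0}^\infty\left(\bar d_kg_k+\sum_{t=0}^{k-1}(\bar d_k-\bar d_{k-1})g_t\frac{r_t}{r_k}\right)\widetilde{q}_k$; (iii) for $s\in\mathbb{N}_0$, $\widetilde{q}_s\in D(T^* )$ iff $((\bar d_k-\bar d_{k-1})/r_k)_{k\in\mathbb{N}_0}\in\ell_2$; (iv) if $((\bar d_k-\bar d_{k-1})/r_k)_{k\in\mathbb{N}_0}\in\ell_2$, then (a) $T$ is closable, (b) $g\in D(\overline{T})$ iff $\sum_{s=0}^\infty\left|g_sd_s+\sum_{k=s+1}^\infty(d_k-d_{k-1})\frac{r_s}{r_k}g_k\right|^2<\infty$, and (c) for $g\in D(\overline{T})$, $\overline{T}g=\sum_{s=0}^\infty\left(g_sd_s+\sum_{k=s+1}^\infty(d_k-d_{k-1})\frac{r_s}{r_k}g_k\right)\widetilde{q}_s$;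 (v) for $\alpha>1$, for the differential operator $m^{\alpha+1}$ regarded in $H(\widetilde{q})$ with domain $\mathcal{P}_c$: (a) $g\in D(\overline{m^{\alpha+1}})$ iff $\sum_{s=0}^\infty\left|g_s(-2s+1)+\sum_{k=s+1}^\infty(-2)\frac{r_s}{r_k}g_k\right|^2<\infty$, and (b) for such $g$, $\overline{m^{\alpha+1}}(g)=\sum_{s=0}^\infty\left(g_s(-2s+1)+\sum_{k=s+1}^\infty(-2)\frac{r_s}{r_k}g_k\right)\widetilde{q}_s$.
   Context: $\mathcal{P}_c$ is the space of polynomials in one real variable with complex coefficients. For $\beta>-1$, $L_n^{(\beta)}(x)=\sum_{k=0}^n\frac{(-1)^k}{k!}\binom{n+\beta}{n-k}x^k$ is the generalized Laguerre polynomial and $r_k^\beta=\sqrt{\Gamma(k+\beta+1)/(k!\,\Gamma(\beta+1))}$ its norm in $L^2((0,\infty),x^\beta e^{-x}dx/\Gamma(\beta+1))$. For a sequence $Q=(Q_n)$ of polynomials with $\deg Q_n=n$, $H(Q)$ is the completion of $\mathcal{P}_c$ with respect to the inner product making $(Q_n)$ orthonormal; $g\in H(Q)$ is written $g=\sum_kg_kQ_k$, $(g_k)\in\ell_2$. $\widetilde{D}$ is the set of non-constant sequences of non-zero complex numbers. For a polynomial sequence $p$ and $d\in\widetilde{D}$, $E_{p,d}$ is the linear map on $\mathcal{P}_c$ with $E_{p,d}(p_n)=d_np_n$; $L^{(\alpha+1)}=(L_n^{(\alpha+1)})_n$. $T^*$ denotes the adjoint and $\overline{T}$ the closure. $m^{\alpha+1}$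 is defined by $(m^{\alpha+1}f)(x)=2xf''(x)+2(\alpha+2-x)f'(x)+f(x)$. *)

theory Defs
  imports "HOL-Analysis.Analysis" "HOL-Computational_Algebra.Polynomial"
begin

definition laguerre :: "real \<Rightarrow> nat \<Rightarrow> complex poly" where
  "laguerre \<beta> n = (\<Sum>k\<le>n. monom (complex_of_real
      ((-1)^k / fact k * ((real n + \<beta>) gchoose (n - k)))) k)"

definition rnorm :: "real \<Rightarrow> nat \<Rightarrow> real" where
  "rnorm \<beta> k = sqrt (Gamma (real k + \<beta> + 1) / (fact k * Gamma (\<beta> + 1)))"

definition qt :: "real \<Rightarrow> nat \<Rightarrow> complex poly" where
  "qt \<alpha> k = smult (complex_of_real (1 / rnorm \<alpha> k)) (laguerre \<alpha> k)"

section \<open>Coordinates with respect to a polynomial basis (deg Q n = n)\<close>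

definition coords :: "(nat \<Rightarrow> complex poly) \<Rightarrow> complex poly \<Rightarrow> nat \<Rightarrow> complex" where
  "coords Q p = (THE c. (\<forall>k>degree p. c k = 0) \<and>
                        p = (\<Sum>k\<le>degree p. smult (c k) (Q k)))"

definition Emap :: "(nat \<Rightarrow> complex poly) \<Rightarrow> (nat \<Rightarrow> complex) \<Rightarrow> complex poly \<Rightarrow> complex poly" where
  "Emap P d f = (\<Sum>k\<le>degree f. smult (d k * coords P f k) (P k))"

definition Dtilde :: "(nat \<Rightarrow> complex) set" where
  "Dtilde = {d. (\<forall>n. d n \<noteq> 0) \<and> \<not> (\<forall>n m. d n = d m)}"

section \<open>The Hilbert space H(qt) modelled by coefficient sequences in l2\<close>

definition l2 :: "(nat \<Rightarrow> complex) \<Rightarrow> bool" where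
  "l2 g \<longleftrightarrow> summable (\<lambda>k. (cmod (g k))^2)"

definition l2inner :: "(nat \<Rightarrow> complex) \<Rightarrow> (nat \<Rightarrow> complex) \<Rightarrow> complex" where
  "l2inner f g = (\<Sum>k. f k * cnj (g k))"

definition l2norm :: "(nat \<Rightarrow> complex) \<Rightarrow> real" where
  "l2norm f = sqrt (\<Sum>k. (cmod (f k))^2)"

definition emb :: "real \<Rightarrow> complex poly \<Rightarrow> nat \<Rightarrow> complex" where
  "emb \<alpha> f = coords (qt \<alpha>) f"

text \<open>Graph of an operator in H(qt) with domain P_c, given by a map on polynomials.\<close>
definition op_graph :: "real \<Rightarrow> (complex poly \<Rightarrow> complex poly) \<Rightarrow> ((nat \<Rightarrow> complex) \<times> (nat \<Rightarrow> complex)) set" where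
  "op_graph \<alpha> A = {(emb \<alpha> f, emb \<alpha> (A f)) | f. True}"

definition adj_dom :: "((nat \<Rightarrow> complex) \<times> (nat \<Rightarrow> complex)) set \<Rightarrow> (nat \<Rightarrow> complex) set" where
  "adj_dom G = {g. l2 g \<and> (\<exists>h. l2 h \<and> (\<forall>(f, y)\<in>G. l2inner y g = l2inner f h))}"

definition adj :: "((nat \<Rightarrow> complex) \<times> (nat \<Rightarrow> complex)) set \<Rightarrow> (nat \<Rightarrow> complex) \<Rightarrow> nat \<Rightarrow> complex" where
  "adj G g = (THE h. l2 h \<and> (\<forall>(f, y)\<in>G. l2inner y g = l2inner f h))"

definition graph_closure :: "((nat \<Rightarrow> complex) \<times> (nat \<Rightarrow> complex)) set \<Rightarrow> ((nat \<Rightarrow> complex) \<times> (nat \<Rightarrow> complex)) set" where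
  "graph_closure G = {(g, h). l2 g \<and> l2 h \<and>
     (\<exists>F. (\<forall>n. F n \<in> G) \<and> (\<lambda>n. l2norm (fst (F n) - g)) \<longlonglongrightarrow> 0
                          \<and> (\<lambda>n. l2norm (snd (F n) - h)) \<longlonglongrightarrow> 0)}"

definition closable :: "((nat \<Rightarrow> complex) \<times> (nat \<Rightarrow> complex)) set \<Rightarrow> bool" where
  "closable G \<longleftrightarrow> (\<forall>g h h'. (g, h) \<in> graph_closure G \<and> (g, h') \<in> graph_closure G \<longrightarrow> h = h')"

definition cl_dom :: "((nat \<Rightarrow> complex) \<times> (nat \<Rightarrow> complex)) set \<Rightarrow> (nat \<Rightarrow> complex) set" where
  "cl_dom G = {g. \<exists>h. (g, h) \<in> graph_closure G}"

definition cl_op :: "((nat \<Rightarrow> complex) \<times> (nat \<Rightarrow> complex)) set \<Rightarrow> (nat \<Rightarrow> complex) \<Rightarrow> nat \<Rightarrow> complex" where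
  "cl_op G g = (THE h. (g, h) \<in> graph_closure G)"

definition mop :: "real \<Rightarrow> complex poly \<Rightarrow> complex poly" where
  "mop \<alpha> f = smult 2 ([:0, 1:] * pderiv (pderiv f))
             + smult 2 ([:complex_of_real (\<alpha> + 2), -1:] * pderiv f) + f"

end

theory Submission
  imports Defs
begin

(*
  Since L^(alpha+1)_n = sum_{j<=n} L^(alpha)_j, the matrix A of T in the orthonormal basis
  q_k = L^(alpha)_k / r_k is upper triangular: (A c)_s = d_s c_s + sum_{k>s} (d_k - d_{k-1}) (r_s/r_k) c_k.
  Testing against unit vectors shows that the adjoint of T is the conjugate transpose B of A,
  on all g with B g square summable; in particular q_s lies in the domain of the adjoint iff the
  column ((d_k - d_{k-1}) / r_k)_k is square summable. In that case all unit vectors e_s do, so a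
  limit (g, h) of the graph satisfies h_s = <g, B e_s> = (A g)_s: T is closable and its closure
  is A on its maximal domain. Conversely, if g and A g are square summable, the truncations
  g_s + lam r_s (s <= m), with lam chosen to cancel the tail sum of A g at the cut-off m, tend to
  (g, A g) in the graph norm: here sum_{s<=m} r_s^2 = O(m r_m^2), and m (|g_m|^2 + |(A g)_m|^2)
  is small along a subsequence. Finally m^(alpha+1) is diagonal on the L^(alpha+1)_n with eigenvalues
  1 - 2n, and sum_k 1/r_k^2 converges for alpha > 1.
*)

lemma smult_sum_right: "smult a (\<Sum>i\<in>A. f i) = (\<Sum>i\<in>A. smult a (f i))"
  by (induction A rule: infinite_finite_induct) (simp_all add: smult_add_right)

lemma sum_smult_diff_by_parts:
  fixes P :: "nat \<Rightarrow> 'a::comm_ring poly"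
  shows "(\<Sum>k\<le>N. smult (y k) (P k - (if k = 0 then 0 else P (k - 1)))) =
         (\<Sum>k\<le>N. smult (y k - y (Suc k)) (P k)) + smult (y (Suc N)) (P N)"
  by (induction N) (simp_all add: smult_diff_left smult_diff_right algebra_simps)

lemma sum_mult_diff_by_parts:
  fixes d y :: "nat \<Rightarrow> 'a::comm_ring"
  assumes "j \<le> N"
  shows "(\<Sum>k\<in>{j..N}. d k * (y k - y (Suc k))) =
         d j * y j + (\<Sum>k\<in>{j<..N}. (d k - d (k - 1)) * y k) - d N * y (Suc N)"
  using assms
proof (induction N)
  case (Suc N)
  show ?case
  proof (cases "j = Suc N")
    case False
    with Suc.prems have "j \<le> N" by simp
    moreover have "{j..Suc N} = insert (Suc N) {j..N}" "{j<..Suc N} = insert (Suc N) {j<..N}"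
      using \<open>j \<le> N\<close> by auto
    ultimately show ?thesis using Suc.IH by (simp add: algebra_simps)
  qed (simp add: algebra_simps)
qed (simp add: algebra_simps)

lemma sum_triangle_swap:
  fixes F :: "nat \<Rightarrow> nat \<Rightarrow> 'a::comm_monoid_add"
  shows "(\<Sum>k\<le>N. \<Sum>j\<le>k. F j k) = (\<Sum>j\<le>N. \<Sum>k\<in>{j..N}. F j k)"
proof -
  have "(\<Sum>k\<le>N. \<Sum>j\<le>k. F j k) = (\<Sum>k\<le>N. \<Sum>j\<in>{j\<in>{..N}. j \<le> k}. F j k)"
    by (intro sum.cong refl) auto
  also have "\<dots> = (\<Sum>j\<le>N. \<Sum>k\<in>{k\<in>{..N}. j \<le> k}. F j k)"
    by (rule sum.swap_restrict) auto
  also have "\<dots> = (\<Sum>j\<le>N. \<Sum>k\<in>{j..N}. F j k)"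
    by (intro sum.cong refl) auto
  finally show ?thesis .
qed

lemma sum_strict_triangle_swap:
  fixes F :: "nat \<Rightarrow> nat \<Rightarrow> 'a::comm_monoid_add"
  shows "(\<Sum>s\<le>N. \<Sum>k\<in>{s<..N}. F s k) = (\<Sum>k\<le>N. \<Sum>s<k. F s k)"
proof -
  have "(\<Sum>s\<le>N. \<Sum>k\<in>{s<..N}. F s k) = (\<Sum>s\<le>N. \<Sum>k\<in>{k\<in>{..N}. s < k}. F s k)"
    by (intro sum.cong refl) auto
  also have "\<dots> = (\<Sum>k\<le>N. \<Sum>s\<in>{s\<in>{..N}. s < k}. F s k)"
    by (rule sum.swap_restrict) auto
  also have "\<dots> = (\<Sum>k\<le>N. \<Sum>s<k. F s k)"
    by (intro sum.cong refl) auto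
  finally show ?thesis .
qed

lemma suminf_shift_finite_support:
  fixes h :: "nat \<Rightarrow> 'a::{t2_space,topological_comm_monoid_add}"
  assumes "\<forall>k>N. h k = 0"
  shows "(\<Sum>i. h (i + j + 1)) = (\<Sum>k\<in>{j<..N}. h k)"
proof -
  have "(\<Sum>i. h (i + j + 1)) = (\<Sum>i<N - j. h (i + j + 1))"
    by (rule suminf_finite) (use assms in auto)
  also have "\<dots> = (\<Sum>k\<in>{j<..N}. h k)"
    by (rule sum.reindex_bij_witness[where i="\<lambda>k. k - j - 1" and j="\<lambda>i. i + j + 1"]) auto
  finally show ?thesis .
qed

lemma sum_telescope_greaterThanAtMost:
  fixes f :: "nat \<Rightarrow> 'a::ab_group_add"
  assumes "s \<le> m"
  shows "(\<Sum>k\<in>{s<..m}. f k - f (k - 1)) = f m - f s"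
  using assms
proof (induction m)
  case (Suc m)
  show ?case
  proof (cases "s = Suc m")
    case False
    with Suc.prems have "s \<le> m" by simp
    moreover have "{s<..Suc m} = insert (Suc m) {s<..m}" using \<open>s \<le> m\<close> by auto
    ultimately show ?thesis using Suc.IH by simp
  qed simp
qed simp

lemma l2_finite_support: "\<forall>k>N. c k = 0 \<Longrightarrow> l2 c"
  unfolding l2_def by (rule summable_finite[of "{..N}"]) auto

lemma norm_add_sq_le:
  fixes x y :: "'a::real_normed_vector"
  shows "(norm (x + y))^2 \<le> 2 * (norm x)^2 + 2 * (norm y)^2"
proof -
  have "(norm (x + y))^2 \<le> (norm x + norm y)^2"
    by (simp add: norm_triangle_ineq power_mono)
  then show ?thesis using sum_squares_bound[of "norm x" "norm y"]
    by (simp add: power2_eq_square algebra_simps)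
qed

lemma l2_add:
  assumes "l2 x" and "l2 y"
  shows "l2 (\<lambda>k. x k + y k)"
proof -
  have "summable (\<lambda>k. 2 * (cmod (x k))^2 + 2 * (cmod (y k))^2)"
    using assms unfolding l2_def by (intro summable_add summable_mult)
  then show ?thesis
    unfolding l2_def by (rule summable_comparison_test[rotated]) (use norm_add_sq_le in auto)
qed

lemma l2_uminus: "l2 x \<Longrightarrow> l2 (\<lambda>k. - x k)"
  unfolding l2_def by simp

lemma l2_diff: "l2 x \<Longrightarrow> l2 y \<Longrightarrow> l2 (x - y)"
  using l2_add[of x "\<lambda>k. - y k"] l2_uminus[of y] by (simp add: fun_diff_def)

lemma l2_cnj_iff: "l2 (\<lambda>k. cnj (x k)) \<longleftrightarrow> l2 x"
  unfolding l2_def by simp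

lemma summable_norm_mult_l2:
  assumes "l2 x" and "l2 y"
  shows "summable (\<lambda>k. cmod (x k * y k))"
proof -
  have bound: "cmod (x k * y k) \<le> (cmod (x k))^2 + (cmod (y k))^2" for k
    using sum_squares_bound[of "cmod (x k)" "cmod (y k)"]
      mult_nonneg_nonneg[OF norm_ge_zero norm_ge_zero, of "x k" "y k"]
    unfolding norm_mult by linarith
  have "summable (\<lambda>k. (cmod (x k))^2 + (cmod (y k))^2)"
    using assms unfolding l2_def by (intro summable_add)
  then show ?thesis by (rule summable_comparison_test[rotated]) (use bound in auto)
qed

lemma summable_mult_l2: "l2 x \<Longrightarrow> l2 y \<Longrightarrow> summable (\<lambda>k. x k * y k)"
  by (rule summable_norm_cancel) (rule summable_norm_mult_l2)

lemma summable_l2inner: "l2 x \<Longrightarrow> l2 y \<Longrightarrow> summable (\<lambda>k. x k * cnj (y k))"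
  using summable_mult_l2[of x "\<lambda>k. cnj (y k)"] by (simp add: l2_cnj_iff)

lemma l2norm_nonneg: "l2 x \<Longrightarrow> l2norm x \<ge> 0"
  unfolding l2norm_def l2_def by (simp add: suminf_nonneg)

lemma L2_set_le_l2norm: "l2 x \<Longrightarrow> L2_set (\<lambda>k. cmod (x k)) A \<le> l2norm x" if "finite A"
  unfolding L2_set_def l2norm_def l2_def using that by (intro real_sqrt_le_mono sum_le_suminf) auto

lemma norm_le_l2norm: "l2 x \<Longrightarrow> cmod (x n) \<le> l2norm x"
  using L2_set_le_l2norm[of "{n}" x] by simp

lemma l2inner_Cauchy_Schwarz:
  assumes "l2 x" and "l2 y"
  shows "cmod (l2inner x y) \<le> l2norm x * l2norm y"
proof -
  have s: "summable (\<lambda>k. cmod (x k * cnj (y k)))"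
    using summable_norm_mult_l2[of x "\<lambda>k. cnj (y k)"] assms by (simp add: l2_cnj_iff)
  have "cmod (l2inner x y) \<le> (\<Sum>k. cmod (x k * cnj (y k)))"
    unfolding l2inner_def by (rule summable_norm[OF s])
  also have "\<dots> \<le> l2norm x * l2norm y"
  proof (rule suminf_le_const[OF s])
    fix n
    have "(\<Sum>k<n. cmod (x k * cnj (y k))) = (\<Sum>k<n. \<bar>cmod (x k)\<bar> * \<bar>cmod (y k)\<bar>)"
      by (simp add: norm_mult)
    also have "\<dots> \<le> L2_set (\<lambda>k. cmod (x k)) {..<n} * L2_set (\<lambda>k. cmod (y k)) {..<n}"
      by (rule L2_set_mult_ineq)
    also have "\<dots> \<le> l2norm x * l2norm y"
      using assms by (intro mult_mono L2_set_le_l2norm l2norm_nonneg L2_set_nonneg) auto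
    finally show "(\<Sum>k<n. cmod (x k * cnj (y k))) \<le> l2norm x * l2norm y" .
  qed
  finally show ?thesis .
qed

lemma l2inner_diff_left: "l2 x \<Longrightarrow> l2 y \<Longrightarrow> l2 v \<Longrightarrow> l2inner (x - y) v = l2inner x v - l2inner y v"
  unfolding l2inner_def by (simp add: left_diff_distrib suminf_diff summable_l2inner)

lemma l2inner_finite_support: "\<forall>k>N. c k = 0 \<Longrightarrow> l2inner c g = (\<Sum>k\<le>N. c k * cnj (g k))"
  unfolding l2inner_def by (rule suminf_finite) auto

lemma tendsto_l2norm_imp_tendsto_coord:
  assumes "\<And>m. l2 (X m)" and "l2 x" and "(\<lambda>m. l2norm (X m - x)) \<longlonglongrightarrow> 0"
  shows "(\<lambda>m. X m n) \<longlonglongrightarrow> x n"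
proof -
  have "(\<lambda>m. X m n - x n) \<longlonglongrightarrow> 0"
  proof (rule Lim_null_comparison[OF always_eventually assms(3)], intro allI)
    show "norm (X m n - x n) \<le> l2norm (X m - x)" for m
      using norm_le_l2norm[OF l2_diff[OF assms(1,2)], of m n] by simp
  qed
  then show ?thesis by (simp add: LIM_zero_iff)
qed

lemma tendsto_l2norm_imp_tendsto_l2inner:
  assumes "\<And>m. l2 (X m)" and "l2 x" and "l2 v" and "(\<lambda>m. l2norm (X m - x)) \<longlonglongrightarrow> 0"
  shows "(\<lambda>m. l2inner (X m) v) \<longlonglongrightarrow> l2inner x v"
proof -
  have "(\<lambda>m. l2inner (X m) v - l2inner x v) \<longlonglongrightarrow> 0"
  proof (rule Lim_null_comparison[OF always_eventually], intro allI)
    show "norm (l2inner (X m) v - l2inner x v) \<le> l2norm (X m - x) * l2norm v" for m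
      using l2inner_Cauchy_Schwarz[OF l2_diff[OF assms(1,2)] assms(3), of m]
      by (simp add: l2inner_diff_left[OF assms(1-3)])
    show "(\<lambda>m. l2norm (X m - x) * l2norm v) \<longlonglongrightarrow> 0"
      using tendsto_mult_left_zero[OF assms(4), of "l2norm v"] by (simp add: mult.commute)
  qed
  then show ?thesis by (simp add: LIM_zero_iff)
qed

lemma l2_tail_small:
  assumes "l2 y" and "e > 0"
  shows "\<exists>N. \<forall>m\<ge>N. (\<Sum>j. (cmod (y (j + Suc m)))^2) < e"
proof -
  obtain N where N: "\<forall>n\<ge>N. norm (\<Sum>i. (cmod (y (i + n)))^2) < e"
    using suminf_exist_split[OF assms(2)] assms(1) unfolding l2_def by blast
  have "(\<Sum>j. (cmod (y (j + Suc m)))^2) < e" if "m \<ge> N" for m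
    using N[rule_format, of "Suc m"] that by simp
  then show ?thesis by blast
qed

(* Otherwise W would dominate a multiple of the harmonic series. *)

lemma summable_ex_mult_index_less:
  fixes W :: "nat \<Rightarrow> real"
  assumes "summable W" and "\<And>m. W m \<ge> 0" and e: "e > 0"
  shows "\<exists>m\<ge>M. W m * (real m + 1) < e"
proof (rule ccontr)
  assume "\<not> ?thesis"
  then have bound: "e * inverse (real (Suc m)) \<le> W m" if "m \<ge> M" for m
    using that e by (auto simp: field_simps not_less)
  have "summable (\<lambda>m. inverse e * W m)" using assms(1) by simp
  then have "summable (\<lambda>m. inverse (real (Suc m)))"
  proof (rule summable_comparison_test'[where N=M])
    fix m assume "m \<ge> M"
    then show "norm (inverse (real (Suc m))) \<le> inverse e * W m"
      using bound[of m] e by (simp add: field_simps)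
  qed
  then have "summable (\<lambda>m. inverse (real m))"
    using summable_Suc_iff[of "\<lambda>m. inverse (real m)"] by simp
  then show False using not_summable_harmonic by blast
qed

lemma suminf_sq_replace_initial:
  fixes y :: "nat \<Rightarrow> complex" and r :: "nat \<Rightarrow> real"
  assumes "l2 y"
  shows "(\<Sum>s. (cmod (if s \<le> m then complex_of_real (r s) * \<mu> else y s))^2) =
         (cmod \<mu>)^2 * (\<Sum>s\<le>m. (r s)^2) + (\<Sum>j. (cmod (y (j + Suc m)))^2)"
proof -
  let ?f = "\<lambda>s. (cmod (if s \<le> m then complex_of_real (r s) * \<mu> else y s))^2"
  have "eventually (\<lambda>s. ?f s = (cmod (y s))^2) sequentially"
    using eventually_gt_at_top[of m] by eventually_elim simp
  then have "summable ?f" using assms unfolding l2_def by (subst summable_cong) auto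
  then have "(\<Sum>s. ?f s) = (\<Sum>j. ?f (j + Suc m)) + (\<Sum>s<Suc m. ?f s)"
    by (rule suminf_split_initial_segment)
  also have "(\<Sum>s<Suc m. ?f s) = (cmod \<mu>)^2 * (\<Sum>s\<le>m. (r s)^2)"
    unfolding lessThan_Suc_atMost sum_distrib_left
    by (rule sum.cong) (auto simp: norm_mult power_mult_distrib)
  finally show ?thesis by simp
qed

lemma graph_closureI:
  assumes "l2 g" and "l2 h" and l2_G: "\<And>z. z \<in> G \<Longrightarrow> l2 (fst z) \<and> l2 (snd z)"
    and approx: "\<And>e. e > 0 \<Longrightarrow> \<exists>z\<in>G. l2norm (fst z - g) < e \<and> l2norm (snd z - h) < e"
  shows "(g, h) \<in> graph_closure G"
proof -
  have "\<forall>m. \<exists>z. z \<in> G \<and> l2norm (fst z - g) < inverse (real (Suc m))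
      \<and> l2norm (snd z - h) < inverse (real (Suc m))"
  proof
    fix m :: nat
    have "inverse (real (Suc m)) > 0" by simp
    from approx[OF this] show "\<exists>z. z \<in> G \<and> l2norm (fst z - g) < inverse (real (Suc m))
      \<and> l2norm (snd z - h) < inverse (real (Suc m))" by blast
  qed
  from choice[OF this] obtain F where F: "\<And>m. F m \<in> G"
    "\<And>m. l2norm (fst (F m) - g) < inverse (real (Suc m))"
    "\<And>m. l2norm (snd (F m) - h) < inverse (real (Suc m))"
    by blast
  have lim: "(\<lambda>m. l2norm (X m - x)) \<longlonglongrightarrow> 0"
    if "\<And>m. l2 (X m)" "l2 x" "\<And>m. l2norm (X m - x) < inverse (real (Suc m))" for X x
  proof (rule Lim_null_comparison[OF always_eventually LIMSEQ_inverse_real_of_nat], intro allI)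
    show "norm (l2norm (X m - x)) \<le> inverse (real (Suc m))" for m
      using that(3)[of m] l2norm_nonneg[OF l2_diff[OF that(1,2)]] by simp
  qed
  have "(\<lambda>m. l2norm (fst (F m) - g)) \<longlonglongrightarrow> 0" "(\<lambda>m. l2norm (snd (F m) - h)) \<longlonglongrightarrow> 0"
    using lim[of "\<lambda>m. fst (F m)" g] lim[of "\<lambda>m. snd (F m)" h] F l2_G assms(1,2) by blast+
  then show ?thesis unfolding graph_closure_def using assms(1,2) F(1) by blast
qed

definition unit_seq :: "nat \<Rightarrow> nat \<Rightarrow> complex" where
  "unit_seq n = (\<lambda>k. if k = n then 1 else 0)"

lemma unit_seq_finite_support: "\<forall>k>n. unit_seq n k = 0"
  by (simp add: unit_seq_def)

lemma l2inner_unit_seq: "l2inner (unit_seq n) h = cnj (h n)"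
proof -
  have "(\<Sum>k\<le>n. unit_seq n k * cnj (h k)) = (\<Sum>k\<le>n. if k = n then cnj (h k) else 0)"
    by (rule sum.cong) (auto simp: unit_seq_def)
  then show ?thesis by (simp add: l2inner_finite_support[OF unit_seq_finite_support])
qed

section \<open>Polynomial bases\<close>

locale poly_basis =
  fixes Q :: "nat \<Rightarrow> complex poly"
  assumes degree_basis: "\<And>k. degree (Q k) = k"
    and lead_coeff_basis: "\<And>k. coeff (Q k) k \<noteq> 0"
begin

lemma degree_sum_basis_le: "degree (\<Sum>k\<le>N. smult (c k) (Q k)) \<le> N"
  by (rule degree_sum_le) (auto intro: order.trans[OF degree_smult_le] simp: degree_basis)

lemma sum_basis_eq_0D:
  assumes "(\<Sum>k\<le>N. smult (c k) (Q k)) = 0" and "k \<le> N"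
  shows "c k = 0"
  using assms
proof (induction N arbitrary: k)
  case 0
  then show ?case using lead_coeff_basis[of 0] by (auto dest: arg_cong[where f="\<lambda>p. coeff p 0"])
next
  case (Suc N)
  have "coeff (\<Sum>k\<le>N. smult (c k) (Q k)) (Suc N) = 0"
    using degree_sum_basis_le[where N=N and c=c] by (simp add: coeff_eq_0)
  moreover have "coeff (\<Sum>k\<le>Suc N. smult (c k) (Q k)) (Suc N) = 0" using Suc.prems by simp
  ultimately have top: "c (Suc N) = 0" using lead_coeff_basis[of "Suc N"] by (simp add: sum.atMost_Suc)
  with Suc.prems have "(\<Sum>k\<le>N. smult (c k) (Q k)) = 0" by (simp add: sum.atMost_Suc)
  with Suc.IH top Suc.prems show ?case by (cases "k = Suc N") auto
qed

lemma ex_sum_basis_repr: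
  assumes "degree p \<le> N"
  shows "\<exists>c. (\<forall>k>N. c k = 0) \<and> p = (\<Sum>k\<le>N. smult (c k) (Q k))"
  using assms
proof (induction N arbitrary: p)
  case 0
  then obtain a where p: "p = [:a:]" by (metis degree_eq_zeroE le_zero_eq)
  obtain b where "Q 0 = [:b:]" and "b \<noteq> 0"
    using degree_basis[of 0] lead_coeff_basis[of 0] by (metis degree_eq_zeroE coeff_pCons_0)
  then show ?case by (intro exI[of _ "\<lambda>k. if k = 0 then a / b else 0"]) (auto simp: p)
next
  case (Suc N)
  define l where "l = coeff p (Suc N) / coeff (Q (Suc N)) (Suc N)"
  have "degree (p - smult l (Q (Suc N))) \<le> N"
  proof (rule degree_le, intro allI impI)
    fix i assume "N < i"
    then consider "i = Suc N" | "i > Suc N" by linarith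
    then show "coeff (p - smult l (Q (Suc N))) i = 0"
    proof cases
      case 2
      then have "coeff p i = 0" "coeff (Q (Suc N)) i = 0"
        using Suc.prems degree_basis[of "Suc N"] by (auto intro: coeff_eq_0)
      then show ?thesis by simp
    qed (use lead_coeff_basis[of "Suc N"] in \<open>simp add: l_def\<close>)
  qed
  from Suc.IH[OF this] obtain c
    where c: "\<forall>k>N. c k = 0" "p - smult l (Q (Suc N)) = (\<Sum>k\<le>N. smult (c k) (Q k))"
    by blast
  have "(\<Sum>k\<le>N. smult ((c(Suc N := l)) k) (Q k)) = (\<Sum>k\<le>N. smult (c k) (Q k))"
    by (rule sum.cong) auto
  then have "p = (\<Sum>k\<le>Suc N. smult ((c(Suc N := l)) k) (Q k))"
    using c(2) by (simp add: sum.atMost_Suc) (metis diff_add_cancel)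
  moreover have "\<forall>k>Suc N. (c(Suc N := l)) k = 0" using c(1) by auto
  ultimately show ?case by blast
qed

lemma sum_basis_extend:
  assumes "\<forall>k>N. c k = 0" and "N \<le> M"
  shows "(\<Sum>k\<le>N. smult (c k) (Q k)) = (\<Sum>k\<le>M. smult (c k) (Q k))"
  by (rule sum.mono_neutral_left) (use assms in auto)

lemma sum_basis_coeffs_unique:
  assumes "\<forall>k>N1. c1 k = 0" and "\<forall>k>N2. c2 k = 0"
    and "(\<Sum>k\<le>N1. smult (c1 k) (Q k)) = (\<Sum>k\<le>N2. smult (c2 k) (Q k))"
  shows "c1 = c2"
proof
  fix k
  define M where "M = max N1 N2"
  have "(\<Sum>k\<le>M. smult (c1 k) (Q k)) = (\<Sum>k\<le>M. smult (c2 k) (Q k))"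
    using assms sum_basis_extend[of N1 c1 M] sum_basis_extend[of N2 c2 M] by (simp add: M_def)
  then have "(\<Sum>k\<le>M. smult (c1 k - c2 k) (Q k)) = 0"
    by (simp add: smult_diff_left sum_subtractf)
  then have "k \<le> M \<Longrightarrow> c1 k = c2 k" using sum_basis_eq_0D[of "\<lambda>k. c1 k - c2 k" M k] by simp
  then show "c1 k = c2 k" using assms(1,2) by (cases "k \<le> M") (auto simp: M_def)
qed

lemma coords_sum_basis:
  assumes "\<forall>k>N. c k = 0"
  shows "coords Q (\<Sum>k\<le>N. smult (c k) (Q k)) = c"
proof -
  let ?p = "\<Sum>k\<le>N. smult (c k) (Q k)"
  let ?repr = "\<lambda>e. (\<forall>k>degree ?p. e k = 0) \<and> ?p = (\<Sum>k\<le>degree ?p. smult (e k) (Q k))"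
  have uniq: "e = c" if "?repr e" for e
    using sum_basis_coeffs_unique[of "degree ?p" e N c] that assms by metis
  obtain c' where c': "?repr c'" using ex_sum_basis_repr[of ?p "degree ?p"] by auto
  then have "?repr c" unfolding uniq[OF c'] .
  then show ?thesis unfolding coords_def using uniq by (rule the_equality)
qed

lemma coords_repr:
  "(\<forall>k>degree p. coords Q p k = 0) \<and> p = (\<Sum>k\<le>degree p. smult (coords Q p k) (Q k))"
proof -
  obtain c where c: "\<forall>k>degree p. c k = 0" "p = (\<Sum>k\<le>degree p. smult (c k) (Q k))"
    using ex_sum_basis_repr[of p "degree p"] by auto
  have "coords Q p = c" by (subst c(2)) (rule coords_sum_basis[OF c(1)])
  then show ?thesis using c by blast
qed

lemma Emap_sum_basis:
  assumes "\<forall>k>N. c k = 0"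
  shows "Emap Q d (\<Sum>k\<le>N. smult (c k) (Q k)) = (\<Sum>k\<le>N. smult (d k * c k) (Q k))"
proof -
  let ?p = "\<Sum>k\<le>N. smult (c k) (Q k)"
  have "Emap Q d ?p = (\<Sum>k\<le>degree ?p. smult (d k * c k) (Q k))"
    by (simp add: Emap_def coords_sum_basis[OF assms])
  also have "\<dots> = (\<Sum>k\<le>N. smult (d k * c k) (Q k))"
    by (rule sum_basis_extend) (use coords_repr[of ?p, THEN conjunct1] coords_sum_basis[OF assms] degree_sum_basis_le in auto)
  finally show ?thesis .
qed

end

section \<open>Laguerre polynomials\<close>

definition laguerre_coeff :: "real \<Rightarrow> nat \<Rightarrow> nat \<Rightarrow> real" where
  "laguerre_coeff \<beta> n i = (if i \<le> n then (-1)^i / fact i * ((real n + \<beta>) gchoose (n - i)) else 0)"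

lemma coeff_laguerre: "coeff (laguerre \<beta> n) i = complex_of_real (laguerre_coeff \<beta> n i)"
  unfolding laguerre_def coeff_sum laguerre_coeff_def by (simp add: coeff_monom)

lemma degree_laguerre: "degree (laguerre \<beta> n) = n"
  and lead_coeff_laguerre: "coeff (laguerre \<beta> n) n \<noteq> 0"
proof -
  show lc: "coeff (laguerre \<beta> n) n \<noteq> 0" by (simp add: coeff_laguerre laguerre_coeff_def)
  show "degree (laguerre \<beta> n) = n"
    by (rule order.antisym, rule degree_le) (auto simp: coeff_laguerre laguerre_coeff_def intro: le_degree lc)
qed

interpretation laguerre: poly_basis "laguerre \<beta>" for \<beta>
  by unfold_locales (auto simp: degree_laguerre lead_coeff_laguerre)

lemma laguerre_plus1_Suc:
  "laguerre (\<beta> + 1) (Suc n) = laguerre (\<beta> + 1) n + laguerre \<beta> (Suc n)"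
proof (rule poly_eqI)
  fix k
  have "laguerre_coeff (\<beta> + 1) (Suc n) k = laguerre_coeff (\<beta> + 1) n k + laguerre_coeff \<beta> (Suc n) k"
  proof (cases "k \<le> n")
    case True
    have "real (Suc n) + (\<beta> + 1) = (real n + (\<beta> + 1)) + 1" "real (Suc n) + \<beta> = real n + (\<beta> + 1)"
      by simp_all
    then have "(real (Suc n) + (\<beta> + 1)) gchoose Suc (n - k)
        = ((real n + (\<beta> + 1)) gchoose (n - k)) + ((real (Suc n) + \<beta>) gchoose Suc (n - k))"
      by (simp only: gbinomial_Suc_Suc)
    moreover have "Suc n - k = Suc (n - k)" using True by simp
    ultimately show ?thesis
      using True by (simp add: laguerre_coeff_def add_divide_distrib ring_distribs del: of_nat_Suc)
  qed (auto simp: laguerre_coeff_def le_Suc_eq)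
  then show "coeff (laguerre (\<beta> + 1) (Suc n)) k = coeff (laguerre (\<beta> + 1) n + laguerre \<beta> (Suc n)) k"
    by (simp add: coeff_laguerre)
qed

lemma laguerre_plus1_eq_sum: "laguerre (\<beta> + 1) n = (\<Sum>j\<le>n. laguerre \<beta> j)"
  by (induction n) (simp add: laguerre_def, simp add: laguerre_plus1_Suc)

lemma laguerre_eq_diff:
  "laguerre \<beta> k = laguerre (\<beta> + 1) k - (if k = 0 then 0 else laguerre (\<beta> + 1) (k - 1))"
  by (cases k) (auto simp: laguerre_plus1_Suc laguerre_plus1_eq_sum)

lemma laguerre_coeff_Suc:
  "(real i + 1) * (real i + \<beta> + 1) * laguerre_coeff \<beta> n (Suc i) = (real i - real n) * laguerre_coeff \<beta> n i"
proof (cases "i < n")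
  case True
  define t where "t = n - Suc i"
  define a where "a = real n + \<beta>"
  have t: "n - i = Suc t" "n - Suc i = t" "real t = real n - real i - 1"
    using True by (auto simp: t_def of_nat_diff)
  have "real (Suc t) * (a gchoose Suc t) = (a - real t) * (a gchoose t)"
    using gbinomial_mult_1[of a t] by (simp add: algebra_simps)
  moreover have "a - real t = real i + \<beta> + 1" using t(3) by (simp add: a_def)
  ultimately have pascal: "real (Suc t) * (a gchoose Suc t) = (real i + \<beta> + 1) * (a gchoose t)"
    by simp
  have fact_Suc_i: "(real i + 1) / fact (Suc i) = 1 / (fact i :: real)"
    by (simp add: fact_Suc del: of_nat_Suc) (simp add: divide_simps)
  have "(real i + 1) * (real i + \<beta> + 1) * laguerre_coeff \<beta> n (Suc i)
      = ((real i + 1) / fact (Suc i)) * (-1)^(Suc i) * ((real i + \<beta> + 1) * (a gchoose t))"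
    using True by (simp add: laguerre_coeff_def t(2) a_def divide_inverse mult_ac)
  also have "\<dots> = - ((-1)^i / fact i) * (real (Suc t) * (a gchoose Suc t))"
    by (simp only: fact_Suc_i pascal) simp
  also have "\<dots> = (real i - real n) * laguerre_coeff \<beta> n i"
    using True t by (simp add: laguerre_coeff_def a_def) (simp add: divide_simps algebra_simps)
  finally show ?thesis .
next
  case False
  then show ?thesis by (cases "i = n") (auto simp: laguerre_coeff_def)
qed

lemma coeff_mop:
  "coeff (mop \<alpha> p) i = 2 * of_nat i * of_nat (Suc i) * coeff p (Suc i)
     + 2 * complex_of_real (\<alpha> + 2) * of_nat (Suc i) * coeff p (Suc i) - 2 * of_nat i * coeff p i + coeff p i"
  by (cases i) (simp_all add: mop_def coeff_pderiv algebra_simps)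

lemma mop_sum_smult: "mop \<alpha> (\<Sum>k\<in>A. smult (c k) (p k)) = (\<Sum>k\<in>A. smult (c k) (mop \<alpha> (p k)))"
proof -
  have add: "mop \<alpha> (p + q) = mop \<alpha> p + mop \<alpha> q" and smult: "mop \<alpha> (smult a p) = smult a (mop \<alpha> p)"
    and zero: "mop \<alpha> 0 = 0" for p q a
    by (rule poly_eqI, simp add: coeff_mop algebra_simps)+
  show ?thesis by (induction A rule: infinite_finite_induct) (simp_all add: add smult zero)
qed

lemma mop_laguerre: "mop \<alpha> (laguerre (\<alpha> + 1) n) = smult (- 2 * of_nat n + 1) (laguerre (\<alpha> + 1) n)"
proof (rule poly_eqI)
  fix i
  let ?l0 = "laguerre_coeff (\<alpha> + 1) n i" and ?l1 = "laguerre_coeff (\<alpha> + 1) n (Suc i)"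
  have "2 * real i * real (Suc i) * ?l1 + 2 * (\<alpha> + 2) * real (Suc i) * ?l1 - 2 * real i * ?l0 + ?l0
      = (- 2 * real n + 1) * ?l0"
    using laguerre_coeff_Suc[of i "\<alpha> + 1" n] by (simp add: algebra_simps)
  then have "complex_of_real (2 * real i * real (Suc i) * ?l1 + 2 * (\<alpha> + 2) * real (Suc i) * ?l1
      - 2 * real i * ?l0 + ?l0) = complex_of_real ((- 2 * real n + 1) * ?l0)"
    by (rule arg_cong)
  then show "coeff (mop \<alpha> (laguerre (\<alpha> + 1) n)) i = coeff (smult (- 2 * of_nat n + 1) (laguerre (\<alpha> + 1) n)) i"
    by (simp add: coeff_mop coeff_laguerre)
qed

lemma mop_eq_Emap: "mop \<alpha> = Emap (laguerre (\<alpha> + 1)) (\<lambda>s. - 2 * of_nat s + 1)"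
proof
  fix f
  let ?c = "coords (laguerre (\<alpha> + 1)) f"
  have "mop \<alpha> f = mop \<alpha> (\<Sum>k\<le>degree f. smult (?c k) (laguerre (\<alpha> + 1) k))"
    using laguerre.coords_repr[where \<beta>="\<alpha> + 1" and p=f] by simp
  also have "\<dots> = Emap (laguerre (\<alpha> + 1)) (\<lambda>s. - 2 * of_nat s + 1) f"
    by (simp add: Emap_def mop_sum_smult mop_laguerre mult.commute)
  finally show "mop \<alpha> f = Emap (laguerre (\<alpha> + 1)) (\<lambda>s. - 2 * of_nat s + 1) f" .
qed

lemma rnorm_pos: "\<alpha> > -1 \<Longrightarrow> rnorm \<alpha> k > 0"
  unfolding rnorm_def by (intro real_sqrt_gt_zero divide_pos_pos mult_pos_pos Gamma_real_pos) auto

lemma rnorm_0: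
  assumes "\<alpha> > -1"
  shows "rnorm \<alpha> 0 = 1"
proof -
  have "Gamma (\<alpha> + 1) > 0" using assms by (intro Gamma_real_pos) simp
  then show ?thesis by (simp add: rnorm_def)
qed

lemma rnorm_Suc_sq:
  assumes "\<alpha> > -1"
  shows "(rnorm \<alpha> (Suc k))^2 = (rnorm \<alpha> k)^2 * (real k + \<alpha> + 1) / (real k + 1)"
proof -
  have sq: "(rnorm \<alpha> n)^2 = Gamma (real n + \<alpha> + 1) / (fact n * Gamma (\<alpha> + 1))" for n
    unfolding rnorm_def using assms
    by (intro real_sqrt_pow2 divide_nonneg_pos mult_pos_pos Gamma_real_pos less_imp_le) auto
  have "real k + \<alpha> + 1 \<notin> \<int>\<^sub>\<le>\<^sub>0" using assms nonpos_Ints_nonpos[of "real k + \<alpha> + 1"] by auto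
  from Gamma_plus1[OF this]
  have "Gamma (real (Suc k) + \<alpha> + 1) = (real k + \<alpha> + 1) * Gamma (real k + \<alpha> + 1)"
    by (simp add: add_ac)
  then show ?thesis using assms by (simp add: sq field_simps)
qed

lemma sum_rnorm_sq:
  assumes "\<alpha> > -1"
  shows "(\<Sum>s\<le>m. (rnorm \<alpha> s)^2) = (rnorm \<alpha> m)^2 * (real m + \<alpha> + 1) / (\<alpha> + 1)"
proof (induction m)
  case (Suc m)
  have "(rnorm \<alpha> m)^2 * (real m + \<alpha> + 1) = (rnorm \<alpha> (Suc m))^2 * (real m + 1)"
    using rnorm_Suc_sq[OF assms, of m] by (simp add: field_simps)
  then show ?case using Suc assms by (simp add: field_simps)
qed (use assms in \<open>simp add: rnorm_0\<close>)

lemma sum_rnorm_sq_le: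
  assumes "\<alpha> > -1"
  shows "(\<Sum>s\<le>m. (rnorm \<alpha> s)^2) \<le> (1 + 1 / (\<alpha> + 1)) * (real m + 1) * (rnorm \<alpha> m)^2"
proof -
  have "(real m + \<alpha> + 1) / (\<alpha> + 1) = 1 + real m / (\<alpha> + 1)" using assms by (simp add: field_simps)
  also have "\<dots> \<le> (1 + 1 / (\<alpha> + 1)) * (real m + 1)"
  proof -
    have "real m / (\<alpha> + 1) \<le> (real m + 1) / (\<alpha> + 1)" using assms by (intro divide_right_mono) auto
    then show ?thesis by (simp add: field_simps)
  qed
  finally have "(real m + \<alpha> + 1) / (\<alpha> + 1) \<le> (1 + 1 / (\<alpha> + 1)) * (real m + 1)" .
  then have "(rnorm \<alpha> m)^2 * ((real m + \<alpha> + 1) / (\<alpha> + 1))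
      \<le> (rnorm \<alpha> m)^2 * ((1 + 1 / (\<alpha> + 1)) * (real m + 1))"
    by (rule mult_left_mono) simp
  then show ?thesis by (simp add: sum_rnorm_sq[OF assms] mult_ac)
qed

lemma summable_inverse_rnorm_sq:
  assumes "\<alpha> > 1"
  shows "summable (\<lambda>k. 1 / (rnorm \<alpha> k)^2)"
proof -
  define x where "x = (\<lambda>k. 1 / (rnorm \<alpha> k)^2)"
  have a: "\<alpha> > -1" using assms by simp
  have x_nonneg: "x k \<ge> 0" for k by (simp add: x_def)
  have x_Suc: "x (Suc k) * (real k + \<alpha> + 1) = x k * (real k + 1)" for k
  proof -
    have "x (Suc k) = ((real k + 1) / (rnorm \<alpha> k)^2) / (real k + \<alpha> + 1)"
      by (simp add: x_def rnorm_Suc_sq[OF a])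
    then show ?thesis using assms by (simp add: x_def)
  qed
  \<comment> \<open>The recursion for \<open>r\<close> makes these partial sums telescope.\<close>
  have partial: "(\<alpha> - 1) * (\<Sum>k<N. x (Suc k)) + (real N + 1) * x N = 1" for N
  proof (induction N)
    case (Suc N)
    then show ?case using x_Suc[of N] by (simp add: algebra_simps)
  qed (simp add: x_def rnorm_0[OF a])
  have "summable (\<lambda>k. x (Suc k))"
  proof (rule summableI_nonneg_bounded)
    fix N
    have "(\<alpha> - 1) * (\<Sum>k<N. x (Suc k)) \<le> 1"
      using partial[of N] x_nonneg[of N] by (smt (verit) mult_nonneg_nonneg of_nat_0_le_iff)
    then show "(\<Sum>k<N. x (Suc k)) \<le> 1 / (\<alpha> - 1)" using assms by (simp add: field_simps)
  qed (rule x_nonneg)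
  then have "summable x" by (simp only: summable_Suc_iff)
  then show ?thesis by (simp only: x_def)
qed

lemma poly_basis_qt: "\<alpha> > -1 \<Longrightarrow> poly_basis (qt \<alpha>)"
  unfolding poly_basis_def qt_def using rnorm_pos[of \<alpha>] less_imp_neq[OF rnorm_pos[of \<alpha>]]
  by (auto simp: degree_laguerre lead_coeff_laguerre)

lemma emb_sum_qt:
  assumes "\<alpha> > -1" and "\<forall>k>N. c k = 0"
  shows "emb \<alpha> (\<Sum>k\<le>N. smult (c k) (qt \<alpha> k)) = c"
  unfolding emb_def by (rule poly_basis.coords_sum_basis[OF poly_basis_qt[OF assms(1)] assms(2)])

lemma emb_repr:
  assumes "\<alpha> > -1"
  shows "(\<forall>k>degree f. emb \<alpha> f k = 0) \<and> f = (\<Sum>k\<le>degree f. smult (emb \<alpha> f k) (qt \<alpha> k))"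
  unfolding emb_def by (rule poly_basis.coords_repr[OF poly_basis_qt[OF assms]])

lemma laguerre_eq_smult_qt:
  "\<alpha> > -1 \<Longrightarrow> laguerre \<alpha> k = smult (complex_of_real (rnorm \<alpha> k)) (qt \<alpha> k)"
  using rnorm_pos[of \<alpha> k] by (simp add: qt_def)

lemma emb_qt:
  assumes "\<alpha> > -1"
  shows "emb \<alpha> (qt \<alpha> s) = unit_seq s"
proof -
  have "(\<Sum>k\<le>s. smult (unit_seq s k) (qt \<alpha> k)) = (\<Sum>k\<le>s. if k = s then qt \<alpha> k else 0)"
    by (rule sum.cong) (auto simp: unit_seq_def)
  then show ?thesis using emb_sum_qt[OF assms unit_seq_finite_support, of s] by simp
qed

section \<open>The matrix of the operator\<close>

definition dprev :: "(nat \<Rightarrow> complex) \<Rightarrow> nat \<Rightarrow> complex" where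
  "dprev d k = (if k = 0 then 0 else d (k - 1))"

(* upper_op d r is the matrix of E_{L^(alpha+1),d} in the basis q_k = L^(alpha)_k / r_k, acting on
   coefficient sequences, and lower_op d r is its conjugate transpose; dprev d encodes d_{-1} = 0. *)

definition upper_op :: "(nat \<Rightarrow> complex) \<Rightarrow> (nat \<Rightarrow> real) \<Rightarrow> (nat \<Rightarrow> complex) \<Rightarrow> nat \<Rightarrow> complex" where
  "upper_op d r g = (\<lambda>s. g s * d s
     + (\<Sum>j. (d (j + s + 1) - dprev d (j + s + 1)) * r s / r (j + s + 1) * g (j + s + 1)))"

definition lower_op :: "(nat \<Rightarrow> complex) \<Rightarrow> (nat \<Rightarrow> real) \<Rightarrow> (nat \<Rightarrow> complex) \<Rightarrow> nat \<Rightarrow> complex" where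
  "lower_op d r g = (\<lambda>k. cnj (d k) * g k + (\<Sum>t<k. (cnj (d k) - cnj (dprev d k)) * r t * g t / r k))"

definition fin_graph :: "(nat \<Rightarrow> complex) \<Rightarrow> (nat \<Rightarrow> real) \<Rightarrow> ((nat \<Rightarrow> complex) \<times> (nat \<Rightarrow> complex)) set" where
  "fin_graph d r = {(c, upper_op d r c) | c. \<exists>N. \<forall>k>N. c k = 0}"

lemma upper_op_finite_support:
  assumes "\<forall>k>N. c k = 0"
  shows "upper_op d r c s =
    (if s \<le> N then c s * d s + (\<Sum>k\<in>{s<..N}. (d k - d (k - 1)) * r s / r k * c k) else 0)"
proof -
  have "(\<Sum>j. (d (j + s + 1) - dprev d (j + s + 1)) * r s / r (j + s + 1) * c (j + s + 1))
       = (\<Sum>k\<in>{s<..N}. (d k - dprev d k) * r s / r k * c k)"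
    by (rule suminf_shift_finite_support) (use assms in auto)
  also have "\<dots> = (\<Sum>k\<in>{s<..N}. (d k - d (k - 1)) * r s / r k * c k)"
    by (rule sum.cong) (auto simp: dprev_def)
  finally show ?thesis using assms by (auto simp: upper_op_def)
qed

lemma l2_upper_op_finite_support: "\<forall>k>N. c k = 0 \<Longrightarrow> l2 (upper_op d r c)"
  by (rule l2_finite_support[of N]) (simp add: upper_op_finite_support)

lemma l2_fin_graph: "z \<in> fin_graph d r \<Longrightarrow> l2 (fst z) \<and> l2 (snd z)"
  unfolding fin_graph_def using l2_finite_support l2_upper_op_finite_support by fastforce

lemma sum_qt_eq_sum_laguerre_plus1:
  assumes "\<alpha> > -1" and "\<forall>k>N. c k = 0"
  defines "y \<equiv> \<lambda>k. c k / complex_of_real (rnorm \<alpha> k)"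
  shows "(\<Sum>k\<le>N. smult (c k) (qt \<alpha> k)) = (\<Sum>k\<le>N. smult (y k - y (Suc k)) (laguerre (\<alpha> + 1) k))"
proof -
  have "(\<Sum>k\<le>N. smult (c k) (qt \<alpha> k)) = (\<Sum>k\<le>N. smult (y k) (laguerre \<alpha> k))"
    by (rule sum.cong) (auto simp: qt_def y_def divide_inverse)
  also have "\<dots> = (\<Sum>k\<le>N. smult (y k)
      (laguerre (\<alpha> + 1) k - (if k = 0 then 0 else laguerre (\<alpha> + 1) (k - 1))))"
    by (subst laguerre_eq_diff) (rule refl)
  also have "\<dots> = (\<Sum>k\<le>N. smult (y k - y (Suc k)) (laguerre (\<alpha> + 1) k))"
    using assms(2) by (simp add: sum_smult_diff_by_parts y_def[symmetric]) (simp add: y_def)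
  finally show ?thesis .
qed

lemma Emap_sum_laguerre_plus1:
  assumes "\<forall>k>N. b k = 0"
  shows "Emap (laguerre (\<beta> + 1)) d (\<Sum>k\<le>N. smult (b k) (laguerre (\<beta> + 1) k)) =
         (\<Sum>j\<le>N. smult (\<Sum>k\<in>{j..N}. d k * b k) (laguerre \<beta> j))"
proof -
  have "Emap (laguerre (\<beta> + 1)) d (\<Sum>k\<le>N. smult (b k) (laguerre (\<beta> + 1) k))
      = (\<Sum>k\<le>N. \<Sum>j\<le>k. smult (d k * b k) (laguerre \<beta> j))"
    unfolding laguerre.Emap_sum_basis[OF assms] by (simp add: laguerre_plus1_eq_sum smult_sum_right)
  also have "\<dots> = (\<Sum>j\<le>N. \<Sum>k\<in>{j..N}. smult (d k * b k) (laguerre \<beta> j))"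
    by (rule sum_triangle_swap)
  finally show ?thesis by (simp add: smult_sum)
qed

lemma emb_Emap_laguerre_plus1:
  assumes a: "\<alpha> > -1" and c: "\<forall>k>N. c k = 0"
  shows "emb \<alpha> (Emap (laguerre (\<alpha> + 1)) d (\<Sum>k\<le>N. smult (c k) (qt \<alpha> k))) = upper_op d (rnorm \<alpha>) c"
proof
  fix s
  let ?r = "\<lambda>k. complex_of_real (rnorm \<alpha> k)"
  define y where "y = (\<lambda>k. c k / ?r k)"
  define b where "b k = (if k \<le> N then y k - y (Suc k) else 0)" for k
  define e where "e j = ?r j * (\<Sum>k\<in>{j..N}. d k * b k)" for j
  have b0: "\<forall>k>N. b k = 0" and e0: "\<forall>j>N. e j = 0" by (simp_all add: b_def e_def)
  have "(\<Sum>k\<le>N. smult (c k) (qt \<alpha> k)) = (\<Sum>k\<le>N. smult (b k) (laguerre (\<alpha> + 1) k))"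
    unfolding sum_qt_eq_sum_laguerre_plus1[OF a c] by (rule sum.cong) (auto simp: b_def y_def)
  then have "Emap (laguerre (\<alpha> + 1)) d (\<Sum>k\<le>N. smult (c k) (qt \<alpha> k)) =
      (\<Sum>j\<le>N. smult (\<Sum>k\<in>{j..N}. d k * b k) (laguerre \<alpha> j))"
    by (simp only: Emap_sum_laguerre_plus1[OF b0])
  also have "\<dots> = (\<Sum>j\<le>N. smult (e j) (qt \<alpha> j))"
    by (intro sum.cong refl) (simp add: laguerre_eq_smult_qt[OF a] e_def mult.commute[of "complex_of_real _"])
  finally have "emb \<alpha> (Emap (laguerre (\<alpha> + 1)) d (\<Sum>k\<le>N. smult (c k) (qt \<alpha> k))) s = e s"
    by (simp add: emb_sum_qt[OF a e0])
  also have "e s = upper_op d (rnorm \<alpha>) c s"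
  proof (cases "s \<le> N")
    case True
    have "y (Suc N) = 0" using c by (simp add: y_def)
    then have "(\<Sum>k\<in>{s..N}. d k * b k) = d s * y s + (\<Sum>k\<in>{s<..N}. (d k - d (k - 1)) * y k)"
      using sum_mult_diff_by_parts[OF True, of d y] by (simp add: b_def)
    then show ?thesis
      using True rnorm_pos[OF a, of s]
      by (simp add: e_def upper_op_finite_support[OF c] y_def distrib_left sum_distrib_left field_simps)
  qed (simp add: e0 upper_op_finite_support[OF c])
  finally show "emb \<alpha> (Emap (laguerre (\<alpha> + 1)) d (\<Sum>k\<le>N. smult (c k) (qt \<alpha> k))) s =
      upper_op d (rnorm \<alpha>) c s" .
qed

lemma op_graph_Emap_laguerre_plus1:
  assumes a: "\<alpha> > -1"
  shows "op_graph \<alpha> (Emap (laguerre (\<alpha> + 1)) d) = fin_graph d (rnorm \<alpha>)"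
proof safe
  fix x y assume "(x, y) \<in> op_graph \<alpha> (Emap (laguerre (\<alpha> + 1)) d)"
  then obtain f where xy: "x = emb \<alpha> f" "y = emb \<alpha> (Emap (laguerre (\<alpha> + 1)) d f)"
    by (auto simp: op_graph_def)
  have "\<forall>k>degree f. x k = 0" "f = (\<Sum>k\<le>degree f. smult (x k) (qt \<alpha> k))"
    using emb_repr[OF a, of f] xy by auto
  then show "(x, y) \<in> fin_graph d (rnorm \<alpha>)"
    using xy(2) emb_Emap_laguerre_plus1[OF a, of "degree f" x d] by (auto simp: fin_graph_def)
next
  fix x y assume "(x, y) \<in> fin_graph d (rnorm \<alpha>)"
  then obtain N where N: "\<forall>k>N. x k = 0" and y: "y = upper_op d (rnorm \<alpha>) x"
    by (auto simp: fin_graph_def)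
  let ?f = "\<Sum>k\<le>N. smult (x k) (qt \<alpha> k)"
  have "(x, y) = (emb \<alpha> ?f, emb \<alpha> (Emap (laguerre (\<alpha> + 1)) d ?f))"
    using emb_sum_qt[OF a N] emb_Emap_laguerre_plus1[OF a N, of d] y by simp
  then show "(x, y) \<in> op_graph \<alpha> (Emap (laguerre (\<alpha> + 1)) d)"
    unfolding op_graph_def by blast
qed

lemma upper_op_mop_eigenvalues:
  "upper_op (\<lambda>s. - 2 * of_nat s + 1) r g
    = (\<lambda>s. g s * (- 2 * of_nat s + 1) + (\<Sum>j. (- 2 :: complex) * r s / r (j + s + 1) * g (j + s + 1)))"
  by (simp add: upper_op_def dprev_def algebra_simps)

lemma l2_jumps_mop:
  assumes "\<alpha> > 1"
  defines "e \<equiv> \<lambda>s. - 2 * of_nat s + 1 :: complex"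
  shows "l2 (\<lambda>k. (cnj (e k) - cnj (dprev e k)) / rnorm \<alpha> k)"
  unfolding l2_def
proof (rule summable_comparison_test[OF _ summable_mult[OF summable_inverse_rnorm_sq[OF assms(1)], of 4]],
    intro exI allI impI)
  fix k :: nat
  have "(cmod (cnj (e k) - cnj (dprev e k)))^2 \<le> 4"
    by (cases k) (simp_all add: e_def dprev_def algebra_simps)
  then show "norm ((cmod ((cnj (e k) - cnj (dprev e k)) / rnorm \<alpha> k))^2) \<le> 4 * (1 / (rnorm \<alpha> k)^2)"
    by (simp add: norm_divide power_divide divide_right_mono)
qed

lemma op_graph_mop:
  "\<alpha> > -1 \<Longrightarrow> op_graph \<alpha> (mop \<alpha>) = fin_graph (\<lambda>s. - 2 * of_nat s + 1) (rnorm \<alpha>)"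
  unfolding mop_eq_Emap by (rule op_graph_Emap_laguerre_plus1)

section \<open>The adjoint\<close>

lemma l2inner_upper_op_finite_support:
  assumes c: "\<forall>k>N. c k = 0"
  shows "l2inner (upper_op d r c) g = l2inner c (lower_op d r g)"
proof -
  have "l2inner (upper_op d r c) g = (\<Sum>s\<le>N. upper_op d r c s * cnj (g s))"
    by (rule l2inner_finite_support) (simp add: upper_op_finite_support[OF c])
  also have "\<dots> = (\<Sum>s\<le>N. c s * d s * cnj (g s))
      + (\<Sum>s\<le>N. \<Sum>k\<in>{s<..N}. (d k - d (k - 1)) * r s / r k * c k * cnj (g s))"
    by (simp add: upper_op_finite_support[OF c] sum_distrib_right distrib_right sum.distrib)
  also have "(\<Sum>s\<le>N. \<Sum>k\<in>{s<..N}. (d k - d (k - 1)) * r s / r k * c k * cnj (g s)) =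
             (\<Sum>k\<le>N. c k * (\<Sum>t<k. (d k - dprev d k) * r t * cnj (g t) / r k))"
    unfolding sum_strict_triangle_swap sum_distrib_left
    by (intro sum.cong refl) (auto simp: dprev_def)
  also have "(\<Sum>s\<le>N. c s * d s * cnj (g s)) + \<dots> = (\<Sum>k\<le>N. c k * cnj (lower_op d r g k))"
    by (simp add: lower_op_def cnj_sum sum.distrib[symmetric] distrib_left mult_ac)
  also have "\<dots> = l2inner c (lower_op d r g)"
    by (rule l2inner_finite_support[symmetric, OF c])
  finally show ?thesis .
qed

lemma adjoint_fin_graph_unique:
  assumes "\<forall>(f, y)\<in>fin_graph d r. l2inner y g = l2inner f h"
  shows "h = lower_op d r g"
proof
  fix n
  have "(unit_seq n, upper_op d r (unit_seq n)) \<in> fin_graph d r"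
    unfolding fin_graph_def using unit_seq_finite_support by blast
  then have "l2inner (upper_op d r (unit_seq n)) g = l2inner (unit_seq n) h" using assms by blast
  then show "h n = lower_op d r g n"
    by (simp add: l2inner_upper_op_finite_support[OF unit_seq_finite_support] l2inner_unit_seq)
qed

lemma adjoint_fin_graph:
  "\<forall>(f, y)\<in>fin_graph d r. l2inner y g = l2inner f (lower_op d r g)"
  unfolding fin_graph_def by (auto simp: l2inner_upper_op_finite_support)

lemma adj_dom_fin_graph_iff: "l2 g \<Longrightarrow> g \<in> adj_dom (fin_graph d r) \<longleftrightarrow> l2 (lower_op d r g)"
  unfolding adj_dom_def using adjoint_fin_graph_unique adjoint_fin_graph by blast

lemma adj_fin_graph: "g \<in> adj_dom (fin_graph d r) \<Longrightarrow> adj (fin_graph d r) g = lower_op d r g"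
  unfolding adj_def adj_dom_def using adjoint_fin_graph_unique adjoint_fin_graph
  by (intro the_equality) blast+

lemma lower_op_unit_seq:
  "lower_op d r (unit_seq s) k =
    (if k = s then cnj (d s) else if s < k then (cnj (d k) - cnj (dprev d k)) * r s / r k else 0)"
proof -
  have "(\<Sum>t<k. (cnj (d k) - cnj (dprev d k)) * r t * unit_seq s t / r k) =
        (\<Sum>t<k. if t = s then (cnj (d k) - cnj (dprev d k)) * r s / r k else 0)"
    by (rule sum.cong) (auto simp: unit_seq_def)
  then show ?thesis by (auto simp: lower_op_def unit_seq_def)
qed

lemma l2_lower_op_unit_seq_iff:
  assumes "r s \<noteq> 0"
  shows "l2 (lower_op d r (unit_seq s)) \<longleftrightarrow> l2 (\<lambda>k. (cnj (d k) - cnj (dprev d k)) / r k)"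
proof -
  have "eventually (\<lambda>k. (cmod (lower_op d r (unit_seq s) k))^2
      = (r s)^2 * (cmod ((cnj (d k) - cnj (dprev d k)) / r k))^2) sequentially"
    using eventually_gt_at_top[of s]
    by eventually_elim (simp add: lower_op_unit_seq norm_mult norm_divide power_mult_distrib power_divide)
  then have "l2 (lower_op d r (unit_seq s)) \<longleftrightarrow>
      summable (\<lambda>k. (r s)^2 * (cmod ((cnj (d k) - cnj (dprev d k)) / r k))^2)"
    unfolding l2_def by (rule summable_cong)
  then show ?thesis using assms unfolding l2_def by simp
qed

lemma l2inner_lower_op_unit_seq:
  assumes g: "l2 g" and v: "l2 (lower_op d r (unit_seq n))"
  shows "l2inner g (lower_op d r (unit_seq n)) = upper_op d r g n"
proof -
  let ?f = "\<lambda>k. g k * cnj (lower_op d r (unit_seq n) k)"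
  have "l2inner g (lower_op d r (unit_seq n)) = (\<Sum>i. ?f (i + Suc n)) + (\<Sum>i<Suc n. ?f i)"
    unfolding l2inner_def by (rule suminf_split_initial_segment[OF summable_l2inner[OF g v]])
  also have "(\<Sum>i<Suc n. ?f i) = g n * d n"
    by (simp add: lower_op_unit_seq if_distrib cong: if_cong)
  also have "(\<Sum>i. ?f (i + Suc n)) =
      (\<Sum>j. (d (j + n + 1) - dprev d (j + n + 1)) * r n / r (j + n + 1) * g (j + n + 1))"
    by (rule suminf_cong) (simp add: lower_op_unit_seq mult_ac)
  finally show ?thesis by (simp add: upper_op_def add_ac)
qed

section \<open>The closure\<close>

(* With every unit vector in the adjoint domain, a limit (g, h) of the graph is determined
   coordinatewise: h_n = <g, B e_n> = (A g)_n. *)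

lemma graph_closure_fin_graph_imp:
  assumes unit_adj: "\<And>n. l2 (lower_op d r (unit_seq n))"
    and gh: "(g, h) \<in> graph_closure (fin_graph d r)"
  shows "h = upper_op d r g"
proof
  fix n
  from gh obtain F where g: "l2 g" and h: "l2 h" and F: "\<And>m. F m \<in> fin_graph d r"
    and lim_fst: "(\<lambda>m. l2norm (fst (F m) - g)) \<longlonglongrightarrow> 0"
    and lim_snd: "(\<lambda>m. l2norm (snd (F m) - h)) \<longlonglongrightarrow> 0"
    unfolding graph_closure_def by blast
  have fin: "\<exists>N. \<forall>k>N. fst (F m) k = 0" and snd_F: "snd (F m) = upper_op d r (fst (F m))" for m
    using F[of m] unfolding fin_graph_def by force+
  have l2_fst: "l2 (fst (F m))" for m using fin l2_finite_support by blast
  have l2_snd: "l2 (snd (F m))" for m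
    using fin[of m] l2_upper_op_finite_support by (auto simp: snd_F)
  have "(\<lambda>m. snd (F m) n) \<longlonglongrightarrow> h n"
    by (rule tendsto_l2norm_imp_tendsto_coord[OF l2_snd h lim_snd])
  moreover have "(\<lambda>m. snd (F m) n) \<longlonglongrightarrow> upper_op d r g n"
    using tendsto_l2norm_imp_tendsto_l2inner[OF l2_fst g unit_adj lim_fst]
    by (simp add: snd_F l2inner_lower_op_unit_seq[OF l2_fst unit_adj] l2inner_lower_op_unit_seq[OF g unit_adj])
  ultimately show "h n = upper_op d r g n" by (rule LIMSEQ_unique)
qed

definition jump_tail :: "(nat \<Rightarrow> complex) \<Rightarrow> (nat \<Rightarrow> real) \<Rightarrow> (nat \<Rightarrow> complex) \<Rightarrow> nat \<Rightarrow> complex" where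
  "jump_tail d r g s = (\<Sum>j. (d (j + s + 1) - dprev d (j + s + 1)) / r (j + s + 1) * g (j + s + 1))"

(* The hypothesis sum_{s<=m} r_s^2 <= K (m+1) r_m^2 is what keeps the correction lam r_s on s <= m,
   which cancels the tail sum jump_tail at the cut-off m, small. *)

context
  fixes d :: "nat \<Rightarrow> complex" and r :: "nat \<Rightarrow> real" and K :: real and g :: "nat \<Rightarrow> complex"
  assumes r_pos: "\<And>k. r k > 0"
    and sum_sq_le: "\<And>m. (\<Sum>s\<le>m. (r s)^2) \<le> K * (real m + 1) * (r m)^2"
    and l2_jumps: "l2 (\<lambda>k. (d k - dprev d k) / r k)"
    and l2_g: "l2 g"
begin

lemma K_pos: "K > 0"
proof -
  have "1 * (r 0)^2 \<le> K * (r 0)^2" using sum_sq_le[of 0] by simp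
  moreover have "0 < (r 0)^2" using r_pos[of 0] by simp
  ultimately have "1 \<le> K" by (rule mult_right_le_imp_le)
  then show ?thesis by simp
qed

lemma summable_jump_terms: "summable (\<lambda>k. (d k - dprev d k) / r k * g k)"
  by (rule summable_mult_l2[OF l2_jumps l2_g])

lemma upper_op_eq_jump_tail: "upper_op d r g s = g s * d s + r s * jump_tail d r g s"
proof -
  have "summable (\<lambda>j. (d (j + s + 1) - dprev d (j + s + 1)) / r (j + s + 1) * g (j + s + 1))"
    using summable_ignore_initial_segment[OF summable_jump_terms, of "s + 1"] by (simp add: add.assoc)
  from suminf_mult[OF this, of "complex_of_real (r s)"] show ?thesis
    by (simp add: upper_op_def jump_tail_def mult_ac)
qed

lemma jump_tail_split:
  assumes "s \<le> m"
  shows "jump_tail d r g s = (\<Sum>k\<in>{s<..m}. (d k - dprev d k) / r k * g k) + jump_tail d r g m"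
proof -
  let ?w = "\<lambda>k. (d k - dprev d k) / r k * g k"
  have "summable (\<lambda>j. ?w (j + s + 1))"
    using summable_ignore_initial_segment[OF summable_jump_terms, of "s + 1"] by (simp add: add.assoc)
  then have "jump_tail d r g s = (\<Sum>i. ?w (i + (m - s) + s + 1)) + (\<Sum>i<m - s. ?w (i + s + 1))"
    unfolding jump_tail_def by (rule suminf_split_initial_segment)
  also have "(\<Sum>i. ?w (i + (m - s) + s + 1)) = jump_tail d r g m"
    unfolding jump_tail_def using assms by (intro suminf_cong) simp
  also have "(\<Sum>i<m - s. ?w (i + s + 1)) = (\<Sum>k\<in>{s<..m}. ?w k)"
    by (rule sum.reindex_bij_witness[where i="\<lambda>k. k - s - 1" and j="\<lambda>i. i + s + 1"]) auto
  finally show ?thesis by simp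
qed

lemma upper_op_perturbed_truncation:
  fixes lam :: complex
  assumes "s \<le> m"
  shows "upper_op d r (\<lambda>s. if s \<le> m then g s + lam * r s else 0) s =
    upper_op d r g s + r s * (lam * d m - jump_tail d r g m)"
proof -
  let ?c = "\<lambda>s. if s \<le> m then g s + lam * r s else 0"
  have "(\<Sum>k\<in>{s<..m}. (d k - d (k - 1)) * r s / r k * ?c k) =
        (\<Sum>k\<in>{s<..m}. r s * ((d k - dprev d k) / r k * g k) + lam * r s * (d k - d (k - 1)))"
  proof (rule sum.cong)
    fix k assume k: "k \<in> {s<..m}"
    then have "dprev d k = d (k - 1)" by (auto simp: dprev_def)
    then show "(d k - d (k - 1)) * r s / r k * ?c k =
        r s * ((d k - dprev d k) / r k * g k) + lam * r s * (d k - d (k - 1))"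
      using k r_pos[of k] by (simp add: field_simps)
  qed simp
  also have "\<dots> = r s * (\<Sum>k\<in>{s<..m}. (d k - dprev d k) / r k * g k)
      + lam * r s * (\<Sum>k\<in>{s<..m}. d k - d (k - 1))"
    by (simp only: sum.distrib sum_distrib_left)
  also have "\<dots> = r s * (jump_tail d r g s - jump_tail d r g m) + lam * r s * (d m - d s)"
    by (simp only: jump_tail_split[OF assms] sum_telescope_greaterThanAtMost[OF assms] add_diff_cancel_right')
  finally have tail: "(\<Sum>k\<in>{s<..m}. (d k - d (k - 1)) * r s / r k * ?c k) =
      r s * (jump_tail d r g s - jump_tail d r g m) + lam * r s * (d m - d s)" .
  have c0: "\<forall>k>m. ?c k = 0" by simp
  have "upper_op d r ?c s = (g s + lam * r s) * d s + (\<Sum>k\<in>{s<..m}. (d k - d (k - 1)) * r s / r k * ?c k)"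
    using upper_op_finite_support[OF c0, of d r s] assms by simp
  also have "\<dots> = (g s + lam * r s) * d s + (r s * (jump_tail d r g s - jump_tail d r g m)
      + lam * r s * (d m - d s))"
    by (simp only: tail)
  also have "\<dots> = upper_op d r g s + r s * (lam * d m - jump_tail d r g m)"
    by (simp add: upper_op_eq_jump_tail algebra_simps)
  finally show ?thesis .
qed

(* (A g)_m = g_m d_m + r_m tau_m with tau = jump_tail d r g: if |d_m| <= 1 take lam = 0,
   otherwise lam = tau_m / d_m. *)

lemma ex_cancelling_multiplier:
  "\<exists>lam. (cmod lam)^2 * (r m)^2 \<le> 2 * ((cmod (upper_op d r g m))^2 + (cmod (g m))^2)
      \<and> (cmod (lam * d m - jump_tail d r g m))^2 * (r m)^2
            \<le> 2 * ((cmod (upper_op d r g m))^2 + (cmod (g m))^2)"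
proof -
  let ?A = "upper_op d r g m" and ?\<tau> = "jump_tail d r g m"
  have A: "?A = g m * d m + r m * ?\<tau>" by (rule upper_op_eq_jump_tail)
  show ?thesis
  proof (cases "cmod (d m) \<le> 1")
    case True
    have "(cmod ?\<tau>)^2 * (r m)^2 = (cmod (?A + - (g m * d m)))^2"
      by (simp add: A norm_mult power_mult_distrib)
    also have "\<dots> \<le> 2 * (cmod ?A)^2 + 2 * (cmod (g m * d m))^2"
      using norm_add_sq_le[of ?A "- (g m * d m)"] by simp
    also have "(cmod (g m * d m))^2 \<le> (cmod (g m))^2"
      using True by (simp add: norm_mult power_mult_distrib mult_left_le power_le_one)
    finally show ?thesis by (intro exI[of _ 0]) simp
  next
    case False
    then have "d m \<noteq> 0" by auto
    have "(cmod (?\<tau> / d m))^2 * (r m)^2 = (cmod (?A / d m + - g m))^2"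
      using \<open>d m \<noteq> 0\<close> by (simp add: A norm_mult norm_divide power_mult_distrib power_divide field_simps)
    also have "\<dots> \<le> 2 * (cmod (?A / d m))^2 + 2 * (cmod (g m))^2"
      using norm_add_sq_le[of "?A / d m" "- g m"] by simp
    also have "(cmod (?A / d m))^2 \<le> (cmod ?A)^2"
    proof -
      have "cmod ?A / cmod (d m) \<le> cmod ?A / 1"
        using False by (intro divide_left_mono) auto
      then show ?thesis by (simp add: norm_divide power_mono)
    qed
    finally show ?thesis using \<open>d m \<noteq> 0\<close> by (intro exI[of _ "?\<tau> / d m"]) simp
  qed
qed

lemma perturbation_sq_sum_less:
  assumes "(cmod \<mu>)^2 * (r m)^2 \<le> 2 * W" and "W * (real m + 1) < e^2 / (4 * K)"
  shows "(cmod \<mu>)^2 * (\<Sum>s\<le>m. (r s)^2) < e^2 / 2"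
proof -
  have "(cmod \<mu>)^2 * (\<Sum>s\<le>m. (r s)^2) \<le> ((cmod \<mu>)^2 * (r m)^2) * (K * (real m + 1))"
    using mult_left_mono[OF sum_sq_le[of m], of "(cmod \<mu>)^2"] by (simp add: mult_ac)
  also have "\<dots> \<le> (2 * W) * (K * (real m + 1))"
    using K_pos by (intro mult_right_mono[OF assms(1)]) simp
  also have "\<dots> = 2 * K * (W * (real m + 1))" by simp
  also have "\<dots> < 2 * K * (e^2 / (4 * K))"
    using K_pos by (intro mult_strict_left_mono[OF assms(2)]) simp
  also have "\<dots> = e^2 / 2" using K_pos by simp
  finally show ?thesis .
qed

lemma l2norm_replace_initial_less:
  fixes y :: "nat \<Rightarrow> complex" and \<mu> :: complex
  assumes "l2 y" and "e > 0"
    and "(\<Sum>j. (cmod (y (j + Suc m)))^2) < e^2 / 2"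
    and "(cmod \<mu>)^2 * (r m)^2 \<le> 2 * W" and "W * (real m + 1) < e^2 / (4 * K)"
  shows "l2norm (\<lambda>s. if s \<le> m then r s * \<mu> else y s) < e"
proof -
  have "(\<Sum>s. (cmod (if s \<le> m then r s * \<mu> else y s))^2) < e^2 / 2 + e^2 / 2"
    unfolding suminf_sq_replace_initial[OF assms(1)]
    using perturbation_sq_sum_less[OF assms(4,5)] assms(3) by (rule add_strict_mono)
  then have "sqrt (\<Sum>s. (cmod (if s \<le> m then r s * \<mu> else y s))^2) < sqrt (e^2)"
    by (intro real_sqrt_less_mono) simp
  then show ?thesis unfolding l2norm_def using assms(2) by simp
qed

lemma fin_graph_approximation:
  assumes l2_A: "l2 (upper_op d r g)" and e: "e > 0"
  shows "\<exists>z\<in>fin_graph d r. l2norm (fst z - g) < e \<and> l2norm (snd z - upper_op d r g) < e"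
proof -
  let ?A = "upper_op d r"
  define W where "W m = (cmod (?A g m))^2 + (cmod (g m))^2" for m
  have W: "summable W" "\<And>m. W m \<ge> 0"
    using l2_A l2_g unfolding W_def l2_def by (auto intro: summable_add)
  have e2: "e^2 / 2 > 0" and e4: "e^2 / (4 * K) > 0" using e K_pos by simp_all
  obtain N1 where N1: "\<forall>m\<ge>N1. (\<Sum>j. (cmod (- g (j + Suc m)))^2) < e^2 / 2"
    using l2_tail_small[OF l2_uminus[OF l2_g] e2] by blast
  obtain N2 where N2: "\<forall>m\<ge>N2. (\<Sum>j. (cmod (- ?A g (j + Suc m)))^2) < e^2 / 2"
    using l2_tail_small[OF l2_uminus[OF l2_A] e2] by blast
  obtain m where m: "m \<ge> max N1 N2" "W m * (real m + 1) < e^2 / (4 * K)"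
    using summable_ex_mult_index_less[OF W e4] by blast
  obtain lam where lam: "(cmod lam)^2 * (r m)^2 \<le> 2 * W m"
    "(cmod (lam * d m - jump_tail d r g m))^2 * (r m)^2 \<le> 2 * W m"
    using ex_cancelling_multiplier[of m] unfolding W_def by blast
  define c where "c = (\<lambda>s. if s \<le> m then g s + lam * r s else 0)"
  have c0: "\<forall>k>m. c k = 0" by (simp add: c_def)
  have "c - g = (\<lambda>s. if s \<le> m then r s * lam else - g s)"
    by (auto simp: c_def fun_eq_iff)
  then have "l2norm (c - g) < e"
    using l2norm_replace_initial_less[OF l2_uminus[OF l2_g] e _ lam(1) m(2)] N1 m(1) by simp
  have "?A c - ?A g = (\<lambda>s. if s \<le> m then r s * (lam * d m - jump_tail d r g m) else - ?A g s)"
  proof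
    fix s
    show "(?A c - ?A g) s = (if s \<le> m then r s * (lam * d m - jump_tail d r g m) else - ?A g s)"
    proof (cases "s \<le> m")
      case True
      then show ?thesis unfolding c_def by (simp add: upper_op_perturbed_truncation)
    qed (simp add: upper_op_finite_support[OF c0])
  qed
  then have "l2norm (?A c - ?A g) < e"
    using l2norm_replace_initial_less[OF l2_uminus[OF l2_A] e _ lam(2) m(2)] N2 m(1) by simp
  moreover have "(c, ?A c) \<in> fin_graph d r" unfolding fin_graph_def using c0 by blast
  ultimately show ?thesis using \<open>l2norm (c - g) < e\<close> by force
qed

end

lemma closure_fin_graph:
  assumes r_pos: "\<And>k. r k > 0"
    and sum_sq_le: "\<And>m. (\<Sum>s\<le>m. (r s)^2) \<le> K * (real m + 1) * (r m)^2"
    and l2_jumps: "l2 (\<lambda>k. (cnj (d k) - cnj (dprev d k)) / r k)"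
  shows "closable (fin_graph d r)"
    and "l2 g \<Longrightarrow> g \<in> cl_dom (fin_graph d r) \<longleftrightarrow> l2 (upper_op d r g)"
    and "g \<in> cl_dom (fin_graph d r) \<Longrightarrow> cl_op (fin_graph d r) g = upper_op d r g"
proof -
  have unit_adj: "l2 (lower_op d r (unit_seq n))" for n
    using l2_lower_op_unit_seq_iff[of r n d] r_pos[of n] l2_jumps by simp
  note closure_eq = graph_closure_fin_graph_imp[OF unit_adj]
  show "closable (fin_graph d r)"
    unfolding closable_def using closure_eq by blast
  show "g \<in> cl_dom (fin_graph d r) \<longleftrightarrow> l2 (upper_op d r g)" if "l2 g"
  proof
    assume "g \<in> cl_dom (fin_graph d r)"
    then obtain h where gh: "(g, h) \<in> graph_closure (fin_graph d r)" unfolding cl_dom_def by blast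
    then have "l2 h" unfolding graph_closure_def by blast
    then show "l2 (upper_op d r g)" using closure_eq[OF gh] by simp
  next
    assume l2_A: "l2 (upper_op d r g)"
    have "l2 (\<lambda>k. (d k - dprev d k) / r k)"
      using l2_jumps l2_cnj_iff[of "\<lambda>k. (d k - dprev d k) / r k"] by simp
    note approx = fin_graph_approximation[OF r_pos sum_sq_le this \<open>l2 g\<close> l2_A]
    have "(g, upper_op d r g) \<in> graph_closure (fin_graph d r)"
      by (rule graph_closureI[OF \<open>l2 g\<close> l2_A l2_fin_graph approx])
    then show "g \<in> cl_dom (fin_graph d r)" unfolding cl_dom_def by blast
  qed
  show "cl_op (fin_graph d r) g = upper_op d r g" if dom: "g \<in> cl_dom (fin_graph d r)"
  proof -
    obtain h where gh: "(g, h) \<in> graph_closure (fin_graph d r)"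
      using dom unfolding cl_dom_def by blast
    then have "(g, upper_op d r g) \<in> graph_closure (fin_graph d r)" using closure_eq[OF gh] by simp
    then show ?thesis unfolding cl_op_def using closure_eq by (rule the_equality)
  qed
qed

theorem theorem3:
  fixes \<alpha> :: real and d :: "nat \<Rightarrow> complex"
  assumes "\<alpha> > -1" and "d \<in> Dtilde"
  defines "dm \<equiv> (\<lambda>k. if k = 0 then 0 else d (k - 1))"
      and "r \<equiv> rnorm \<alpha>"
      and "G \<equiv> op_graph \<alpha> (Emap (laguerre (\<alpha> + 1)) d)"
  shows
   "(\<forall>g. l2 g \<longrightarrow>
       (g \<in> adj_dom G \<longleftrightarrow>
        summable (\<lambda>k. (cmod (cnj (d k) * g k
           + (\<Sum>t<k. (cnj (d k) - cnj (dm k)) * r t * g t / r k)))^2)))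
    \<and> (\<forall>g \<in> adj_dom G.
        adj G g = (\<lambda>k. cnj (d k) * g k
           + (\<Sum>t<k. (cnj (d k) - cnj (dm k)) * g t * r t / r k)))
    \<and> (\<forall>s. emb \<alpha> (qt \<alpha> s) \<in> adj_dom G \<longleftrightarrow>
           l2 (\<lambda>k. (cnj (d k) - cnj (dm k)) / r k))
    \<and> (l2 (\<lambda>k. (cnj (d k) - cnj (dm k)) / r k) \<longrightarrow>
         closable G
       \<and> (\<forall>g. l2 g \<longrightarrow>
           (g \<in> cl_dom G \<longleftrightarrow>
            summable (\<lambda>s. (cmod (g s * d s
              + (\<Sum>j. (d (j + s + 1) - dm (j + s + 1)) * r s / r (j + s + 1) * g (j + s + 1))))^2)))
       \<and> (\<forall>g \<in> cl_dom G.
           cl_op G g = (\<lambda>s. g s * d s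
              + (\<Sum>j. (d (j + s + 1) - dm (j + s + 1)) * r s / r (j + s + 1) * g (j + s + 1)))))
    \<and> (\<alpha> > 1 \<longrightarrow>
         (\<forall>g. l2 g \<longrightarrow>
           (g \<in> cl_dom (op_graph \<alpha> (mop \<alpha>)) \<longleftrightarrow>
            summable (\<lambda>s. (cmod (g s * (- 2 * of_nat s + 1)
              + (\<Sum>j. (- 2) * r s / r (j + s + 1) * g (j + s + 1))))^2)))
       \<and> (\<forall>g \<in> cl_dom (op_graph \<alpha> (mop \<alpha>)).
           cl_op (op_graph \<alpha> (mop \<alpha>)) g = (\<lambda>s. g s * (- 2 * of_nat s + 1)
              + (\<Sum>j. (- 2) * r s / r (j + s + 1) * g (j + s + 1)))))"
proof -
  have dm: "dm = dprev d" by (simp add: dm_def dprev_def fun_eq_iff)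
  have G: "G = fin_graph d r"
    unfolding G_def r_def by (rule op_graph_Emap_laguerre_plus1[OF assms(1)])
  have r_pos: "\<And>k. r k > 0" unfolding r_def by (rule rnorm_pos[OF assms(1)])
  have sum_le: "\<And>m. (\<Sum>s\<le>m. (r s)^2) \<le> (1 + 1 / (\<alpha> + 1)) * (real m + 1) * (r m)^2"
    unfolding r_def by (rule sum_rnorm_sq_le[OF assms(1)])
  note closure = closure_fin_graph[OF r_pos sum_le]
  show ?thesis
    unfolding G dm op_graph_mop[OF assms(1), folded r_def] emb_qt[OF assms(1)]
    apply (intro conjI impI allI ballI)
    subgoal for g using adj_dom_fin_graph_iff[of g d r] by (simp add: l2_def lower_op_def)
    subgoal for g using adj_fin_graph[of g d r] by (simp add: lower_op_def mult_ac)
    subgoal for s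
      using adj_dom_fin_graph_iff[OF l2_finite_support[OF unit_seq_finite_support], of s d r]
        l2_lower_op_unit_seq_iff[of r s d] r_pos[of s] by simp
    subgoal using closure(1) .
    subgoal for g using closure(2)[of d g] by (simp add: l2_def upper_op_def)
    subgoal for g using closure(3)[of d g] by (simp add: upper_op_def)
    subgoal premises prems for g
      using closure(2)[OF l2_jumps_mop[OF prems(1), folded r_def] prems(2)]
      unfolding upper_op_mop_eigenvalues l2_def .
    subgoal premises prems for g
      using closure(3)[OF l2_jumps_mop[OF prems(1), folded r_def] prems(2)]
      unfolding upper_op_mop_eigenvalues .
    done
qed

end
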